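(* Let $N=\binom n2$, let $s_{i_1}\cdots s_{i_N}=(s_1\cdots s_{n-1})(s_1\cdots s_{n-2})\cdots(s_1)$, and let $\Phi_{id,w_0}:\mathbb{R}_{>0}^N\to\mathbb{R}^{2^n-2}$ send $\mathbf a=(a_1,\dots,a_N)$ to the Plücker coordinates $(P_I(M(\mathbf a)))_{\emptyset\ne I\subsetneq[n]}$ of $M(\mathbf a)=x_{i_1}(a_1)\cdots x_{i_N}(a_N)$; this map is injective, with inverse $\Psi_{id,w_0}$ on its image. Then $\Psi_{id,w_0}$ can be expressed by Laurent monomials in the extremal non-zero Plücker coordinates: for each $j\in[N]$ there is a Laurent monomial $m_j$ in the variables $P_I$, $I$ extremal, such that $a_j=m_j\big((P_I(M(\mathbf a)))_{I\text{ extremal}}\big)$ for all $\mathbf a\in\mathbb{R}_{>0}^N$.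
   Context: $x_k(a)$ is the $n\times n$ identity matrix with an extra entry $a$ in row $k$, column $k+1$. $P_I(M)$ is the minor of $M$ in rows $1,\dots,|I|$ and columns $I$. For flags of the form $M(\mathbf a)$ with $\mathbf a>0$, all $P_I$ are positive, and the extremal indices are defined as follows: for a $k$-subset $I$, let $B=\{i\in I:\exists j\notin I,\ i<j,\ P_{(I\setminus i)\cup j}\ne0\}$; if $P_I\ne0$ and $B\neq\emptyset$, set $b=\max B$, $a=\max\{j\notin I: P_{(I\setminus b)\cup j}\ne0\}$ and $\Xi(I)=(I\setminus b)\cup a$, otherwise $\Xi(I)=I$; with $I_k$ the Gale-minimal $k$-subset with $P_{I_k}\ne 0$ (here $I_k=[k]$), the extremal indices are the sets $\Xi^m(I_k)$, $m\ge0$, $k\in[n-1]$. (Concretely, these are the sets $\{1,\dots,m\}\cup\{k,\dots,n\}$ of size at most $n-1$.) *)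

theory Defs
  imports "Jordan_Normal_Form.Determinant"
begin

text \<open>Matrices are n x n real matrices of type real mat (0-based internally);
  row/column indices of the paper (1..n) are shifted by one.\<close>

text \<open>x_k(a): identity with extra entry a in row k, column k+1 (1-based k).\<close>
definition xk :: "nat \<Rightarrow> nat \<Rightarrow> real \<Rightarrow> real mat" where
  "xk n k a = mat n n (\<lambda>(i,j). if i = j then 1 else if i + 1 = k \<and> j = k then a else 0)"

text \<open>The reduced word (s_1...s_{n-1})(s_1...s_{n-2})...(s_1) as list i_1..i_N.\<close>
definition redword :: "nat \<Rightarrow> nat list" where
  "redword n = concat (map (\<lambda>k. [1..<Suc k]) (rev [1..<n]))"

definition Nn :: "nat \<Rightarrow> nat" where
  "Nn n = n choose 2"

definition Mflag :: "nat \<Rightarrow> real list \<Rightarrow> real mat" where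
  "Mflag n as = foldr (\<lambda>(k, a) B. xk n k a * B) (zip (redword n) as) (1\<^sub>m n)"

definition plucker :: "real mat \<Rightarrow> nat set \<Rightarrow> real" where
  "plucker M I = det (mat (card I) (card I)
      (\<lambda>(i,j). M $$ (i, sorted_list_of_set I ! j - 1)))"

definition gale_le :: "nat set \<Rightarrow> nat set \<Rightarrow> bool" where
  "gale_le I J = (\<forall>t < card I. sorted_list_of_set I ! t \<le> sorted_list_of_set J ! t)"

definition Xi :: "nat \<Rightarrow> (nat set \<Rightarrow> real) \<Rightarrow> nat set \<Rightarrow> nat set" where
  "Xi n P I =
    (let B = {i \<in> I. \<exists>j \<in> {1..n} - I. i < j \<and> P ((I - {i}) \<union> {j}) \<noteq> 0} in
     if P I \<noteq> 0 \<and> B \<noteq> {} then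
       (let b = Max B; a = Max {j \<in> {1..n} - I. P ((I - {b}) \<union> {j}) \<noteq> 0}
        in (I - {b}) \<union> {a})
     else I)"

definition Ik :: "nat \<Rightarrow> (nat set \<Rightarrow> real) \<Rightarrow> nat \<Rightarrow> nat set" where
  "Ik n P k = (THE I. I \<subseteq> {1..n} \<and> card I = k \<and> P I \<noteq> 0 \<and>
      (\<forall>J. J \<subseteq> {1..n} \<and> card J = k \<and> P J \<noteq> 0 \<longrightarrow> gale_le I J))"

definition extremal :: "nat \<Rightarrow> (nat set \<Rightarrow> real) \<Rightarrow> nat set set" where
  "extremal n P = {(Xi n P ^^ m) (Ik n P k) | m k. 1 \<le> k \<and> k \<le> n - 1}"

end

theory Submission
  imports Defs
begin

(* Write a' = drop n a for the last binom(n,2) parameters. Then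
   M_{n+1}(a) = x_1(a_1) ... x_n(a_n) diag(M_n(a'), 1), so row i of M_{n+1}(a) is row i of
   diag(M_n(a'), 1) plus a_i times row i+1 of M_{n+1}(a), and its last column is
   (a_i ... a_n)_i. Subtracting these multiples of the next rows from the minor of M_{n+1}(a)
   with columns [m] \<union> [n+1-p, n+1] and expanding along the last column gives
   P_{[m] \<union> [n+1-p, n+1]}(M_{n+1}(a)) = a_{m+p+1} ... a_n P_{[m] \<union> [n-p+1, n]}(M_n(a')).
   Hence these minors are positive, a_t = P_{[t-1] \<union> {n+1}} / P_{[t] \<union> {n+1}}, and by
   induction on n every parameter is a Laurent monomial in the minors P_{[m] \<union> [n-p+1, n]}.
   For M(a) these sets are exactly the extremal indices: Xi moves the largest element m of
   the initial block [m] to n-p, and I_k = [k]. Injectivity follows from the formula. *)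

section \<open>The rows of M(a)\<close>

lemma xk_carrier_mat [simp]: "xk n k a \<in> carrier_mat n n"
  unfolding xk_def by auto

lemma index_xk_mult:
  assumes B: "B \<in> carrier_mat n n" and k: "1 \<le> k" "k < n" and ij: "i < n" "j < n"
  shows "(xk n k a * B) $$ (i, j) = B $$ (i, j) + (if i = k - 1 then a * B $$ (k, j) else 0)"
proof -
  have "(xk n k a * B) $$ (i, j) = (\<Sum>l\<in>{0..<n}. xk n k a $$ (i, l) * B $$ (l, j))"
    using B ij by (auto simp: index_mult_mat scalar_prod_def xk_def)
  also have "\<dots> = (\<Sum>l\<in>{0..<n}. (if l = i then B $$ (i, j) else 0) +
      (if l = k \<and> i = k - 1 then a * B $$ (k, j) else 0))"
    using ij k by (intro sum.cong) (auto simp: xk_def)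
  also have "\<dots> = B $$ (i, j) + (if i = k - 1 then a * B $$ (k, j) else 0)"
    using ij k by (simp add: sum.distrib)
  finally show ?thesis .
qed

abbreviation xk_mult_list :: "nat \<Rightarrow> (nat \<times> real) list \<Rightarrow> real mat \<Rightarrow> real mat" where
  "xk_mult_list n ps B \<equiv> foldr (\<lambda>(k, a) B. xk n k a * B) ps B"

lemma xk_mult_list_carrier: "B \<in> carrier_mat n n \<Longrightarrow> xk_mult_list n ps B \<in> carrier_mat n n"
  by (induction ps) (auto intro!: mult_carrier_mat[of _ n n _ n])

lemma xk_mult_list_unitriangular:
  assumes "\<forall>(k, a) \<in> set ps. 1 \<le> k \<and> k < n" and "i < n" "j \<le> i"
  shows "xk_mult_list n ps (1\<^sub>m n) $$ (i, j) = (if i = j then 1 else 0)"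
  using assms
proof (induction ps arbitrary: i)
  case (Cons p ps)
  obtain k a where p: "p = (k, a)" by (cases p)
  have k: "1 \<le> k" "k < n" using Cons.prems p by auto
  have B: "xk_mult_list n ps (1\<^sub>m n) \<in> carrier_mat n n" by (rule xk_mult_list_carrier) auto
  show ?case
    using index_xk_mult[OF B k Cons.prems(2), of j a] Cons.IH[of i] Cons.IH[of k] Cons.prems p k
    by auto
qed simp

definition embed_mat :: "nat \<Rightarrow> real mat \<Rightarrow> real mat" where
  "embed_mat n A = mat n n (\<lambda>(i, j).
     if i < n - 1 \<and> j < n - 1 then A $$ (i, j) else if i = j then 1 else 0)"

lemma embed_mat_carrier [simp]: "embed_mat n A \<in> carrier_mat n n"
  unfolding embed_mat_def by auto

lemma xk_mult_list_embed_mat: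
  assumes "\<forall>(k, a) \<in> set ps. 1 \<le> k \<and> k < n - 1"
  shows "xk_mult_list n ps (1\<^sub>m n) = embed_mat n (xk_mult_list (n - 1) ps (1\<^sub>m (n - 1)))"
  using assms
proof (induction ps)
  case Nil
  show ?case by (rule eq_matI) (auto simp: embed_mat_def)
next
  case (Cons p ps)
  obtain k a where p: "p = (k, a)" by (cases p)
  have k: "1 \<le> k" "k < n - 1" using Cons.prems p by auto
  define B where "B = xk_mult_list (n - 1) ps (1\<^sub>m (n - 1))"
  have B: "B \<in> carrier_mat (n - 1) (n - 1)"
    unfolding B_def by (rule xk_mult_list_carrier) auto
  have IH: "xk_mult_list n ps (1\<^sub>m n) = embed_mat n B"
    using Cons unfolding B_def by auto
  show ?case
  proof (rule eq_matI)
    fix i j assume "i < dim_row (embed_mat n (xk_mult_list (n - 1) (p # ps) (1\<^sub>m (n - 1))))"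
      and "j < dim_col (embed_mat n (xk_mult_list (n - 1) (p # ps) (1\<^sub>m (n - 1))))"
    then have ij: "i < n" "j < n" by (auto simp: embed_mat_def)
    have "xk_mult_list n (p # ps) (1\<^sub>m n) $$ (i, j) = (xk n k a * embed_mat n B) $$ (i, j)"
      using IH p by simp
    also have "\<dots> = embed_mat n (xk (n - 1) k a * B) $$ (i, j)"
      using index_xk_mult[OF embed_mat_carrier, of k n i j a] index_xk_mult[OF B, of k i j a] k ij B
      by (auto simp: embed_mat_def)
    finally show "xk_mult_list n (p # ps) (1\<^sub>m n) $$ (i, j) =
        embed_mat n (xk_mult_list (n - 1) (p # ps) (1\<^sub>m (n - 1))) $$ (i, j)"
      using p B_def by simp
  qed (use xk_mult_list_carrier[of "1\<^sub>m n" n "p # ps"] in \<open>auto simp: embed_mat_def\<close>)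
qed

lemma index_xk_mult_list_upt:
  assumes W: "W \<in> carrier_mat n n" and r: "1 \<le> r" and ij: "i < n" "j < n"
  shows "xk_mult_list n (map (\<lambda>k. (k, c k)) [r..<n]) W $$ (i, j) = W $$ (i, j) +
    (if r \<le> Suc i \<and> Suc i < n
     then c (Suc i) * xk_mult_list n (map (\<lambda>k. (k, c k)) [r..<n]) W $$ (Suc i, j) else 0)"
  using r ij
proof (induction "n - r" arbitrary: r i)
  case 0
  then show ?case by auto
next
  case (Suc d)
  define G where "G = xk_mult_list n (map (\<lambda>k. (k, c k)) [Suc r..<n]) W"
  have G: "G \<in> carrier_mat n n" unfolding G_def by (rule xk_mult_list_carrier[OF W])
  have rn: "r < n" using Suc.hyps(2) by auto
  have step: "xk_mult_list n (map (\<lambda>k. (k, c k)) [r..<n]) W = xk n r (c r) * G"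
    unfolding G_def using rn by (simp add: upt_conv_Cons)
  have IH: "G $$ (i', j) = W $$ (i', j) +
      (if Suc r \<le> Suc i' \<and> Suc i' < n then c (Suc i') * G $$ (Suc i', j) else 0)"
    if "i' < n" for i'
    unfolding G_def using Suc that by auto
  have xG: "(xk n r (c r) * G) $$ (i', j) = G $$ (i', j) + (if i' = r - 1 then c r * G $$ (r, j) else 0)"
    if "i' < n" for i'
    using index_xk_mult[OF G Suc.prems(1) rn that Suc.prems(3)] .
  show ?case
    unfolding step using xG[OF Suc.prems(2)] xG[of "Suc i"] IH[OF Suc.prems(2)] IH[of r] rn Suc.prems
    by (cases "i = r - 1") auto
qed

lemma redword_Suc: "redword (Suc n) = [1..<Suc n] @ redword n"
  by (cases n) (simp_all add: redword_def)

lemma redword_bounds: "k \<in> set (redword n) \<Longrightarrow> 1 \<le> k \<and> k < n"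
  unfolding redword_def by auto

lemma Mflag_unitriangular: "i < n \<Longrightarrow> j \<le> i \<Longrightarrow> Mflag n as $$ (i, j) = (if i = j then 1 else 0)"
  unfolding Mflag_def by (rule xk_mult_list_unitriangular) (auto dest!: set_zip_leftD redword_bounds)

lemma Mflag_Suc:
  "Mflag (Suc n) as = xk_mult_list (Suc n) (zip [1..<Suc n] (take n as)) (embed_mat (Suc n) (Mflag n (drop n as)))"
proof -
  have "Mflag (Suc n) as = xk_mult_list (Suc n) (zip [1..<Suc n] (take n as))
      (xk_mult_list (Suc n) (zip (redword n) (drop n as)) (1\<^sub>m (Suc n)))"
    unfolding Mflag_def redword_Suc zip_append1 foldr_append length_upt by (simp del: upt_Suc)
  also have "xk_mult_list (Suc n) (zip (redword n) (drop n as)) (1\<^sub>m (Suc n)) =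
      embed_mat (Suc n) (Mflag n (drop n as))"
    unfolding Mflag_def by (subst xk_mult_list_embed_mat) (auto dest!: set_zip_leftD redword_bounds)
  finally show ?thesis .
qed

(* Indices are 0-based: as ! i is the parameter a_{i+1}, and row i is row i+1 of the paper. *)
lemma Mflag_Suc_row_recurrence:
  assumes len: "n \<le> length as" and ij: "i \<le> n" "j \<le> n"
  shows "Mflag (Suc n) as $$ (i, j) = embed_mat (Suc n) (Mflag n (drop n as)) $$ (i, j) +
    (if i < n then as ! i * Mflag (Suc n) as $$ (Suc i, j) else 0)"
proof -
  have "zip [1..<Suc n] (take n as) = map (\<lambda>k. (k, as ! (k - 1))) [1..<Suc n]"
    using len by (intro nth_equalityI) (simp_all del: upt_Suc)
  then show ?thesis
    using index_xk_mult_list_upt[OF embed_mat_carrier, of 1 i "Suc n" j "\<lambda>k. as ! (k - 1)"] ij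
    unfolding Mflag_Suc by auto
qed

lemma Mflag_Suc_last_column:
  assumes len: "n \<le> length as"
  shows "i \<le> n \<Longrightarrow> Mflag (Suc n) as $$ (i, n) = (\<Prod>t\<in>{i..<n}. as ! t)"
proof (induction "n - i" arbitrary: i)
  case 0
  then show ?case
    using Mflag_Suc_row_recurrence[OF len, of n n] by (simp add: embed_mat_def)
next
  case (Suc d)
  then have "i < n" by auto
  then show ?case
    using Mflag_Suc_row_recurrence[OF len, of i n] Suc
    by (simp add: embed_mat_def prod.atLeast_Suc_lessThan)
qed

section \<open>The minors with columns [m] \<union> [n-p+1, n]\<close>

lemma det_eq_by_next_row_elimination:
  fixes A B :: "'a :: comm_ring_1 mat"
  assumes A: "A \<in> carrier_mat k k" and B: "B \<in> carrier_mat k k"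
    and rows: "\<And>i j. Suc i < k \<Longrightarrow> j < k \<Longrightarrow> A $$ (i, j) = B $$ (i, j) + c i * A $$ (Suc i, j)"
    and last_row: "\<And>j. j < k \<Longrightarrow> A $$ (k - 1, j) = B $$ (k - 1, j)"
  shows "det A = det B"
proof -
  define L :: "'a mat" where
    "L = mat k k (\<lambda>(i, j). if i = j then 1 else if j = Suc i then - c i else 0)"
  have L: "L \<in> carrier_mat k k" unfolding L_def by auto
  have "L * A = B"
  proof (rule eq_matI)
    fix i j assume "i < dim_row B" "j < dim_col B"
    then have ij: "i < k" "j < k" using B by auto
    have "(L * A) $$ (i, j) = (\<Sum>l\<in>{0..<k}. L $$ (i, l) * A $$ (l, j))"
      using ij A L by (auto simp: index_mult_mat scalar_prod_def)
    also have "\<dots> = (\<Sum>l\<in>{0..<k}. (if l = i then A $$ (i, j) else 0) +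
        (if l = Suc i then - c i * A $$ (Suc i, j) else 0))"
      using ij by (intro sum.cong) (auto simp: L_def)
    also have "\<dots> = A $$ (i, j) + (if Suc i < k then - c i * A $$ (Suc i, j) else 0)"
      using ij by (simp add: sum.distrib)
    also have "\<dots> = B $$ (i, j)"
    proof (cases "Suc i < k")
      case False
      then have "i = k - 1" using ij by simp
      then show ?thesis using last_row ij False by simp
    qed (use rows ij in simp)
    finally show "(L * A) $$ (i, j) = B $$ (i, j)" .
  qed (use L A B in auto)
  moreover have "det L = 1"
  proof -
    have "upper_triangular L" unfolding upper_triangular_def L_def by auto
    then have "det L = prod_list (diag_mat L)" using L by (rule det_upper_triangular)
    also have "diag_mat L = replicate k 1" unfolding diag_mat_def L_def by (auto intro: nth_equalityI)
    finally show ?thesis by simp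
  qed
  ultimately show ?thesis using det_mult[OF L A] by simp
qed

lemma det_last_col_zero_above_diag:
  fixes A :: "'a :: comm_ring_1 mat"
  assumes A: "A \<in> carrier_mat (Suc k) (Suc k)" and zero: "\<And>i. i < k \<Longrightarrow> A $$ (i, k) = 0"
  shows "det A = A $$ (k, k) * det (mat_delete A k k)"
proof -
  have "det A = (\<Sum>i<Suc k. A $$ (i, k) * cofactor A i k)"
    by (rule laplace_expansion_column[OF A]) simp
  also have "\<dots> = A $$ (k, k) * cofactor A k k"
    using zero by (simp add: lessThan_Suc)
  finally show ?thesis by (simp add: cofactor_def)
qed

definition head_tail :: "nat \<Rightarrow> nat \<Rightarrow> nat \<Rightarrow> nat set" where
  "head_tail n m p = {1..m} \<union> {Suc n - p..n}"

lemma sorted_list_of_set_head_tail: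
  assumes "m + p \<le> n"
  shows "sorted_list_of_set (head_tail n m p) = [1..<Suc m] @ [Suc n - p..<Suc n]"
proof -
  let ?xs = "[1..<Suc m] @ [Suc n - p..<Suc n]"
  have "head_tail n m p = set ?xs" unfolding head_tail_def by auto
  moreover have "sorted ?xs" "distinct ?xs" using assms by (auto simp: sorted_append)
  ultimately show ?thesis by (metis sorted_list_of_set.idem_if_sorted_distinct)
qed

lemma card_head_tail:
  assumes "m + p \<le> n"
  shows "card (head_tail n m p) = m + p"
proof -
  have "card (head_tail n m p) = length (sorted_list_of_set (head_tail n m p))" by simp
  also have "\<dots> = m + p" using assms by (simp add: sorted_list_of_set_head_tail del: upt_Suc)
  finally show ?thesis .
qed

lemma plucker_head_tail:
  assumes "m + p \<le> n"
  shows "plucker M (head_tail n m p) =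
    det (mat (m + p) (m + p) (\<lambda>(i, j). M $$ (i, if j < m then j else n - p + (j - m))))"
proof -
  have "sorted_list_of_set (head_tail n m p) ! j - 1 = (if j < m then j else n - p + (j - m))"
    if "j < m + p" for j
    using that assms by (simp add: sorted_list_of_set_head_tail nth_append del: upt_Suc)
  then show ?thesis
    unfolding plucker_def card_head_tail[OF assms] by (intro arg_cong[where f = det] eq_matI) auto
qed

lemma head_tail_0: "head_tail n m 0 = {1..m}"
  unfolding head_tail_def by auto

lemma head_tail_full: "m + p = n \<Longrightarrow> head_tail n m p = {1..n}"
  unfolding head_tail_def by auto

lemma plucker_Mflag_initial:
  assumes "k \<le> n"
  shows "plucker (Mflag n as) {1..k} = 1"
proof -
  define A where "A = mat k k (\<lambda>(i, j). Mflag n as $$ (i, j))"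
  have "mat k k (\<lambda>(i, j). Mflag n as $$ (i, if j < k then j else n + (j - k))) = A"
    by (rule eq_matI) (auto simp: A_def)
  then have "plucker (Mflag n as) {1..k} = det A"
    using plucker_head_tail[of k 0 n "Mflag n as"] assms by (simp only: head_tail_0 add_0_right diff_zero)
  also have "det A = prod_list (diag_mat A)"
    by (rule det_upper_triangular) (use assms in \<open>auto simp: A_def upper_triangular_def Mflag_unitriangular\<close>)
  also have "diag_mat A = replicate k 1"
    using assms by (auto simp: A_def diag_mat_def Mflag_unitriangular map_replicate_const intro: nth_equalityI)
  finally show ?thesis by simp
qed

lemma plucker_Mflag_Suc_head_tail:
  assumes len: "n \<le> length as" and mp: "m + p < n"
  shows "plucker (Mflag (Suc n) as) (head_tail (Suc n) m (Suc p)) =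
    (\<Prod>t\<in>{m+p..<n}. as ! t) * plucker (Mflag n (drop n as)) (head_tail n m p)"
proof -
  define k where "k = m + p"
  define c where "c j = (if j < m then j else n - p + (j - m))" for j
  define W where "W = embed_mat (Suc n) (Mflag n (drop n as))"
  define A where "A = mat (Suc k) (Suc k) (\<lambda>(i, j). Mflag (Suc n) as $$ (i, c j))"
  define B where "B = mat (Suc k) (Suc k) (\<lambda>(i, j). if i < k then W $$ (i, c j) else Mflag (Suc n) as $$ (i, c j))"
  have c_le: "c j \<le> n" if "j \<le> k" for j using that mp by (auto simp: c_def k_def)
  have c_less: "c j < n" if "j < k" for j using that mp by (auto simp: c_def k_def)
  have c_k: "c k = n" using mp by (simp add: c_def k_def)
  have "plucker (Mflag (Suc n) as) (head_tail (Suc n) m (Suc p)) = det A"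
    using plucker_head_tail[of m "Suc p" "Suc n" "Mflag (Suc n) as"] mp
    unfolding A_def c_def k_def diff_Suc_Suc by simp
  also have "det A = det B"
  proof (rule det_eq_by_next_row_elimination[where c = "\<lambda>i. as ! i"])
    fix i j assume "Suc i < Suc k" "j < Suc k"
    then show "A $$ (i, j) = B $$ (i, j) + as ! i * A $$ (Suc i, j)"
      using Mflag_Suc_row_recurrence[OF len, of i "c j"] c_le mp by (simp add: A_def B_def W_def k_def)
  qed (auto simp: A_def B_def)
  also have "det B = B $$ (k, k) * det (mat_delete B k k)"
    by (rule det_last_col_zero_above_diag) (use c_k mp in \<open>auto simp: B_def W_def embed_mat_def k_def\<close>)
  also have "B $$ (k, k) = (\<Prod>t\<in>{m+p..<n}. as ! t)"
    using Mflag_Suc_last_column[OF len, of k] c_k mp by (simp add: B_def k_def)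
  also have "mat_delete B k k = mat k k (\<lambda>(i, j). Mflag n (drop n as) $$ (i, c j))"
  proof (rule eq_matI)
    fix i j assume "i < dim_row (mat k k (\<lambda>(i, j). Mflag n (drop n as) $$ (i, c j)))"
      and "j < dim_col (mat k k (\<lambda>(i, j). Mflag n (drop n as) $$ (i, c j)))"
    then have "i < k" "j < k" by auto
    with c_less[of j] mp show "mat_delete B k k $$ (i, j) = mat k k (\<lambda>(i, j). Mflag n (drop n as) $$ (i, c j)) $$ (i, j)"
      by (simp add: mat_delete_def B_def W_def embed_mat_def k_def)
  qed (simp_all add: B_def)
  also have "det \<dots> = plucker (Mflag n (drop n as)) (head_tail n m p)"
    using plucker_head_tail[of m p n] mp by (simp add: c_def k_def)
  finally show ?thesis .
qed

definition pos_params :: "nat \<Rightarrow> real list set" where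
  "pos_params n = {as. length as = Nn n \<and> (\<forall>x \<in> set as. x > 0)}"

lemma Nn_Suc: "Nn (Suc n) = n + Nn n"
  unfolding Nn_def numeral_2_eq_2 by simp

lemma pos_params_drop: "as \<in> pos_params (Suc n) \<Longrightarrow> drop n as \<in> pos_params n"
  unfolding pos_params_def Nn_Suc by (auto dest: in_set_dropD)

lemma pos_params_length: "as \<in> pos_params (Suc n) \<Longrightarrow> n \<le> length as"
  unfolding pos_params_def Nn_Suc by auto

lemma pos_params_nth: "as \<in> pos_params (Suc n) \<Longrightarrow> t < n \<Longrightarrow> as ! t > 0"
  unfolding pos_params_def Nn_Suc by auto

lemma pos_params_prod_pos: "as \<in> pos_params (Suc n) \<Longrightarrow> (\<Prod>t\<in>{a..<n}. as ! t) > 0"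
  by (rule prod_pos) (auto dest: pos_params_nth)

lemma plucker_Mflag_head_tail_pos:
  "as \<in> pos_params n \<Longrightarrow> m + p \<le> n \<Longrightarrow> plucker (Mflag n as) (head_tail n m p) > 0"
proof (induction p arbitrary: n as)
  case 0
  then show ?case using plucker_Mflag_initial[of m n as] by (simp add: head_tail_0)
next
  case (Suc p)
  show ?case
  proof (cases "m + Suc p = n")
    case True
    then show ?thesis using plucker_Mflag_initial[of n n as] by (simp add: head_tail_full)
  next
    case False
    then obtain n' where n: "n = Suc n'" and mp: "m + p < n'" using Suc.prems by (cases n) auto
    with Suc show ?thesis
      by (simp add: plucker_Mflag_Suc_head_tail pos_params_length pos_params_drop pos_params_prod_pos)
  qed
qed

lemma plucker_Mflag_head_tail_1:
  assumes len: "n \<le> length as" and t: "t \<le> n"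
  shows "plucker (Mflag (Suc n) as) (head_tail (Suc n) t 1) = (\<Prod>u\<in>{t..<n}. as ! u)"
proof (cases "t = n")
  case True
  then show ?thesis using plucker_Mflag_initial[of "Suc n" "Suc n" as] by (simp add: head_tail_full)
next
  case False
  then show ?thesis
    using plucker_Mflag_Suc_head_tail[OF len, of t 0] plucker_Mflag_initial[of t n "drop n as"] t
    by (simp add: head_tail_0)
qed

section \<open>Laurent monomials\<close>

definition laurent_monomial_on :: "'x set \<Rightarrow> 'i set \<Rightarrow> ('x \<Rightarrow> 'i \<Rightarrow> 'a :: field) \<Rightarrow> ('x \<Rightarrow> 'a) \<Rightarrow> bool" where
  "laurent_monomial_on D S v f \<longleftrightarrow> (\<exists>e :: 'i \<Rightarrow> int. \<forall>x \<in> D. f x = (\<Prod>i\<in>S. v x i powi e i))"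

lemma laurent_monomial_on_cong:
  "laurent_monomial_on D S v f \<Longrightarrow> (\<And>x. x \<in> D \<Longrightarrow> f x = g x) \<Longrightarrow> laurent_monomial_on D S v g"
  unfolding laurent_monomial_on_def by metis

lemma laurent_monomial_on_1: "laurent_monomial_on D S v (\<lambda>_. 1)"
  unfolding laurent_monomial_on_def by (intro exI[of _ "\<lambda>_. 0"]) simp

lemma laurent_monomial_on_var:
  assumes "finite S" "i \<in> S"
  shows "laurent_monomial_on D S v (\<lambda>x. v x i)"
  unfolding laurent_monomial_on_def
proof (intro exI[of _ "\<lambda>j. if j = i then 1 else 0"] ballI)
  fix x
  have "(\<Prod>j\<in>S. v x j powi (if j = i then 1 else 0)) = (\<Prod>j\<in>S. if j = i then v x j else 1)"
    by (intro prod.cong) auto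
  also have "\<dots> = v x i" using assms by (simp add: prod.delta')
  finally show "v x i = (\<Prod>j\<in>S. v x j powi (if j = i then 1 else 0))" by simp
qed

lemma laurent_monomial_on_mult:
  assumes nz: "\<And>x i. x \<in> D \<Longrightarrow> i \<in> S \<Longrightarrow> v x i \<noteq> 0"
    and f: "laurent_monomial_on D S v f" and g: "laurent_monomial_on D S v g"
  shows "laurent_monomial_on D S v (\<lambda>x. f x * g x)"
proof -
  obtain e1 e2 where
    e1: "\<forall>x\<in>D. f x = (\<Prod>i\<in>S. v x i powi e1 i)" and e2: "\<forall>x\<in>D. g x = (\<Prod>i\<in>S. v x i powi e2 i)"
    using f g unfolding laurent_monomial_on_def by blast
  show ?thesis
    unfolding laurent_monomial_on_def
  proof (intro exI[of _ "\<lambda>i. e1 i + e2 i"] ballI)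
    fix x assume "x \<in> D"
    then show "f x * g x = (\<Prod>i\<in>S. v x i powi (e1 i + e2 i))"
      using e1 e2 nz by (simp add: power_int_add prod.distrib)
  qed
qed

lemma laurent_monomial_on_inverse:
  assumes "laurent_monomial_on D S v f"
  shows "laurent_monomial_on D S v (\<lambda>x. inverse (f x))"
proof -
  obtain e where e: "\<forall>x\<in>D. f x = (\<Prod>i\<in>S. v x i powi e i)"
    using assms unfolding laurent_monomial_on_def by blast
  show ?thesis
    unfolding laurent_monomial_on_def
  proof (intro exI[of _ "\<lambda>i. - e i"] ballI)
    fix x assume "x \<in> D"
    then show "inverse (f x) = (\<Prod>i\<in>S. v x i powi (- e i))"
      using e prod_inversef[of "\<lambda>i. v x i powi e i" S] by (simp add: power_int_minus comp_def)
  qed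
qed

lemma laurent_monomial_on_divide:
  assumes "\<And>x i. x \<in> D \<Longrightarrow> i \<in> S \<Longrightarrow> v x i \<noteq> 0"
    and "laurent_monomial_on D S v f" "laurent_monomial_on D S v g"
  shows "laurent_monomial_on D S v (\<lambda>x. f x / g x)"
  using laurent_monomial_on_mult[OF assms(1,2) laurent_monomial_on_inverse[OF assms(3)]]
  by (simp add: divide_inverse)

lemma prod_power_int: "(\<Prod>i\<in>S. f i powi z) = (\<Prod>i\<in>S. f i :: 'a :: field) powi z"
  by (induction S rule: infinite_finite_induct) (simp_all add: power_int_mult_distrib)

lemma laurent_monomial_on_power_int:
  assumes "laurent_monomial_on D S v f"
  shows "laurent_monomial_on D S v (\<lambda>x. f x powi z)"
proof -
  obtain e where e: "\<forall>x\<in>D. f x = (\<Prod>i\<in>S. v x i powi e i)"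
    using assms unfolding laurent_monomial_on_def by blast
  show ?thesis
    unfolding laurent_monomial_on_def
  proof (intro exI[of _ "\<lambda>i. e i * z"] ballI)
    fix x assume "x \<in> D"
    then show "f x powi z = (\<Prod>i\<in>S. v x i powi (e i * z))"
      using e by (simp flip: prod_power_int power_int_mult)
  qed
qed

lemma laurent_monomial_on_prod:
  assumes "\<And>x i. x \<in> D \<Longrightarrow> i \<in> S \<Longrightarrow> v x i \<noteq> 0"
    and "finite A" "\<And>a. a \<in> A \<Longrightarrow> laurent_monomial_on D S v (g a)"
  shows "laurent_monomial_on D S v (\<lambda>x. \<Prod>a\<in>A. g a x)"
  using assms(2,3)
  by (induction A rule: finite_induct) (auto intro: laurent_monomial_on_1 laurent_monomial_on_mult[OF assms(1)])

lemma laurent_monomial_on_compose: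
  assumes nz: "\<And>y j. y \<in> D' \<Longrightarrow> j \<in> T \<Longrightarrow> w y j \<noteq> 0"
    and S: "finite S" and h: "h ` D' \<subseteq> D"
    and f: "laurent_monomial_on D S v f"
    and v: "\<And>i. i \<in> S \<Longrightarrow> laurent_monomial_on D' T w (\<lambda>y. v (h y) i)"
  shows "laurent_monomial_on D' T w (\<lambda>y. f (h y))"
proof -
  obtain e where e: "\<forall>x\<in>D. f x = (\<Prod>i\<in>S. v x i powi e i)"
    using f unfolding laurent_monomial_on_def by blast
  have "laurent_monomial_on D' T w (\<lambda>y. \<Prod>i\<in>S. v (h y) i powi e i)"
  proof (rule laurent_monomial_on_prod[OF nz S])
    fix i assume "i \<in> S"
    then show "laurent_monomial_on D' T w (\<lambda>y. v (h y) i powi e i)"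
      by (rule laurent_monomial_on_power_int[OF v])
  qed
  then show ?thesis
  proof (rule laurent_monomial_on_cong)
    fix y assume "y \<in> D'"
    then have "h y \<in> D" using h by blast
    with e show "(\<Prod>i\<in>S. v (h y) i powi e i) = f (h y)" by simp
  qed
qed

definition head_tail_sets :: "nat \<Rightarrow> nat set set" where
  "head_tail_sets n = {head_tail n m p | m p. 1 \<le> m + p \<and> m + p \<le> n - 1}"

lemma finite_head_tail_sets: "finite (head_tail_sets n)"
proof (rule finite_subset)
  show "head_tail_sets n \<subseteq> Pow {1..n}"
    unfolding head_tail_sets_def head_tail_def by auto
qed simp

lemma head_tail_sets_proper:
  assumes "I \<in> head_tail_sets n"
  shows "I \<noteq> {} \<and> I \<subset> {1..n}"
proof -
  obtain m p where I: "I = head_tail n m p" and mp: "1 \<le> m + p" "m + p < n"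
    using assms unfolding head_tail_sets_def by force
  have "(if m = 0 then n else 1) \<in> I" "Suc m \<in> {1..n} - I" "I \<subseteq> {1..n}"
    using mp unfolding I head_tail_def by auto
  then show ?thesis by blast
qed

abbreviation laurent_in_pluckers :: "nat \<Rightarrow> (real list \<Rightarrow> real) \<Rightarrow> bool" where
  "laurent_in_pluckers n \<equiv> laurent_monomial_on (pos_params n) (head_tail_sets n) (\<lambda>as. plucker (Mflag n as))"

lemma plucker_head_tail_sets_nonzero:
  assumes "as \<in> pos_params n" and "I \<in> head_tail_sets n"
  shows "plucker (Mflag n as) I \<noteq> 0"
proof -
  obtain m p where "I = head_tail n m p" "m + p \<le> n"
    using assms(2) unfolding head_tail_sets_def by force
  then show ?thesis using plucker_Mflag_head_tail_pos[OF assms(1)] by force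
qed

lemma laurent_plucker_head_tail:
  assumes "m + p \<le> n"
  shows "laurent_in_pluckers n (\<lambda>as. plucker (Mflag n as) (head_tail n m p))"
proof (cases "m + p = 0 \<or> m + p = n")
  case True
  then have "head_tail n m p = {1..m + p}" unfolding head_tail_def by auto
  then show ?thesis
    using assms plucker_Mflag_initial[of "m + p" n]
    by (intro laurent_monomial_on_cong[OF laurent_monomial_on_1]) simp
next
  case False
  then have "head_tail n m p \<in> head_tail_sets n"
    using assms unfolding head_tail_sets_def by force
  then show ?thesis by (rule laurent_monomial_on_var[OF finite_head_tail_sets])
qed

lemma laurent_param_first:
  assumes t: "t < n"
  shows "laurent_in_pluckers (Suc n) (\<lambda>as. as ! t)"
proof -
  have "laurent_in_pluckers (Suc n) (\<lambda>as. plucker (Mflag (Suc n) as) (head_tail (Suc n) t 1) /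
      plucker (Mflag (Suc n) as) (head_tail (Suc n) (Suc t) 1))"
    using t by (intro laurent_monomial_on_divide laurent_plucker_head_tail plucker_head_tail_sets_nonzero) auto
  then show ?thesis
  proof (rule laurent_monomial_on_cong)
    fix as assume as: "as \<in> pos_params (Suc n)"
    have "plucker (Mflag (Suc n) as) (head_tail (Suc n) t 1) = as ! t * (\<Prod>u\<in>{Suc t..<n}. as ! u)"
      using plucker_Mflag_head_tail_1[OF pos_params_length[OF as], of t] t
      by (simp add: prod.atLeast_Suc_lessThan)
    moreover have "plucker (Mflag (Suc n) as) (head_tail (Suc n) (Suc t) 1) = (\<Prod>u\<in>{Suc t..<n}. as ! u)"
      using plucker_Mflag_head_tail_1[OF pos_params_length[OF as], of "Suc t"] t by simp
    moreover have "(\<Prod>u\<in>{Suc t..<n}. as ! u) \<noteq> 0"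
      using pos_params_prod_pos[OF as, of "Suc t"] by linarith
    ultimately show "plucker (Mflag (Suc n) as) (head_tail (Suc n) t 1) /
        plucker (Mflag (Suc n) as) (head_tail (Suc n) (Suc t) 1) = as ! t"
      by simp
  qed
qed

lemma laurent_plucker_drop:
  assumes "I \<in> head_tail_sets n"
  shows "laurent_in_pluckers (Suc n) (\<lambda>as. plucker (Mflag n (drop n as)) I)"
proof -
  obtain m p where I: "I = head_tail n m p" and mp: "m + p < n"
    using assms unfolding head_tail_sets_def by force
  have "laurent_in_pluckers (Suc n)
      (\<lambda>as. plucker (Mflag (Suc n) as) (head_tail (Suc n) m (Suc p)) / (\<Prod>t\<in>{m+p..<n}. as ! t))"
    using mp
    by (intro laurent_monomial_on_divide laurent_plucker_head_tail laurent_monomial_on_prod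
        laurent_param_first plucker_head_tail_sets_nonzero) auto
  then show ?thesis
  proof (rule laurent_monomial_on_cong)
    fix as assume as: "as \<in> pos_params (Suc n)"
    have "(\<Prod>t\<in>{m+p..<n}. as ! t) \<noteq> 0"
      using pos_params_prod_pos[OF as, of "m + p"] by linarith
    then show "plucker (Mflag (Suc n) as) (head_tail (Suc n) m (Suc p)) / (\<Prod>t\<in>{m+p..<n}. as ! t) =
        plucker (Mflag n (drop n as)) I"
      using mp by (simp add: I plucker_Mflag_Suc_head_tail pos_params_length[OF as])
  qed
qed

lemma laurent_params:
  "j < Nn n \<Longrightarrow> laurent_in_pluckers n (\<lambda>as. as ! j)"
proof (induction n arbitrary: j)
  case 0
  then show ?case by (simp add: Nn_def binomial_eq_0)
next
  case (Suc n)
  show ?case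
  proof (cases "j < n")
    case True
    then show ?thesis by (rule laurent_param_first)
  next
    case False
    have IH: "laurent_in_pluckers n (\<lambda>bs. bs ! (j - n))"
      using Suc.IH Suc.prems False by (simp add: Nn_Suc)
    have "laurent_in_pluckers (Suc n) (\<lambda>as. drop n as ! (j - n))"
    proof (rule laurent_monomial_on_compose[OF _ finite_head_tail_sets _ IH])
      show "drop n ` pos_params (Suc n) \<subseteq> pos_params n"
        using pos_params_drop by blast
    qed (simp_all add: plucker_head_tail_sets_nonzero laurent_plucker_drop)
    then show ?thesis
    proof (rule laurent_monomial_on_cong)
      fix as assume "as \<in> pos_params (Suc n)"
      then show "drop n as ! (j - n) = as ! j" using False by (simp add: pos_params_length)
    qed
  qed
qed

lemma inj_on_pluckers_Mflag:
  "inj_on (\<lambda>as. \<lambda>I \<in> {I. I \<noteq> {} \<and> I \<subset> {1..n}}. plucker (Mflag n as) I) (pos_params n)"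
proof (rule inj_onI)
  fix as bs assume as: "as \<in> pos_params n" and bs: "bs \<in> pos_params n"
    and eq: "(\<lambda>I \<in> {I. I \<noteq> {} \<and> I \<subset> {1..n}}. plucker (Mflag n as) I) =
      (\<lambda>I \<in> {I. I \<noteq> {} \<and> I \<subset> {1..n}}. plucker (Mflag n bs) I)"
  have same_minors: "plucker (Mflag n as) I = plucker (Mflag n bs) I" if "I \<in> head_tail_sets n" for I
    using fun_cong[OF eq, of I] head_tail_sets_proper[OF that] by simp
  show "as = bs"
  proof (rule nth_equalityI)
    show "length as = length bs" using as bs by (simp add: pos_params_def)
    fix j assume "j < length as"
    then have "j < Nn n" using as by (simp add: pos_params_def)
    then obtain e where e: "\<forall>cs \<in> pos_params n. cs ! j = (\<Prod>I\<in>head_tail_sets n. plucker (Mflag n cs) I powi e I)"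
      using laurent_params unfolding laurent_monomial_on_def by blast
    show "as ! j = bs ! j"
      using e as bs same_minors by simp
  qed
qed

section \<open>Extremal indices\<close>

lemma sorted_list_of_set_nth_ge_Suc:
  assumes "finite J" "(0::nat) \<notin> J"
  shows "t < card J \<Longrightarrow> Suc t \<le> sorted_list_of_set J ! t"
proof (induction t)
  case 0
  then have "sorted_list_of_set J ! 0 \<in> J"
    using assms(1) nth_mem[of 0 "sorted_list_of_set J"] by simp
  then show ?case using assms(2) by (cases "sorted_list_of_set J ! 0") auto
next
  case (Suc t)
  have "sorted_list_of_set J ! t < sorted_list_of_set J ! Suc t"
    using sorted_wrt_nth_less[OF strict_sorted_list_of_set, of t "Suc t" J] Suc.prems by auto
  then show ?case using Suc by auto
qed

lemma gale_le_initial: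
  assumes "J \<subseteq> {1..n}" "card J = k"
  shows "gale_le {1..k} J"
proof -
  have "sorted_list_of_set {1..k} = [1..<Suc k]"
    by (metis atLeastLessThanSuc_atLeastAtMost sorted_list_of_set_range)
  moreover have "finite J" "0 \<notin> J" using assms(1) finite_subset by auto
  ultimately show ?thesis
    unfolding gale_le_def using sorted_list_of_set_nth_ge_Suc[of J] assms(2) by (auto simp del: upt_Suc)
qed

lemma gale_le_initial_imp_eq:
  assumes "I \<subseteq> {1..n}" "card I = k" "gale_le I {1..k}"
  shows "I = {1..k}"
proof -
  have fin: "finite I" and "0 \<notin> I" using assms(1) finite_subset by auto
  have sl: "sorted_list_of_set {1..k} = [1..<Suc k]"
    by (metis atLeastLessThanSuc_atLeastAtMost sorted_list_of_set_range)
  have "sorted_list_of_set I = [1..<Suc k]"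
  proof (rule nth_equalityI)
    show "length (sorted_list_of_set I) = length [1..<Suc k]" using assms(2) by simp
    fix t assume "t < length (sorted_list_of_set I)"
    then have t: "t < k" using assms(2) by simp
    have "sorted_list_of_set I ! t \<le> Suc t"
      using assms(3) t assms(2) unfolding gale_le_def sl by (auto simp del: upt_Suc)
    moreover have "Suc t \<le> sorted_list_of_set I ! t"
      using sorted_list_of_set_nth_ge_Suc[OF fin \<open>0 \<notin> I\<close>, of t] assms(2) t by simp
    ultimately show "sorted_list_of_set I ! t = [1..<Suc k] ! t" using t by (simp del: upt_Suc)
  qed
  then show ?thesis
    using set_sorted_list_of_set[OF fin] by (metis atLeastLessThanSuc_atLeastAtMost set_upt)
qed

lemma Ik_eq_initial:
  assumes "k \<le> n" and "P {1..k} \<noteq> 0"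
  shows "Ik n P k = {1..k}"
  unfolding Ik_def
proof (rule the_equality)
  show "{1..k} \<subseteq> {1..n} \<and> card {1..k} = k \<and> P {1..k} \<noteq> 0 \<and>
      (\<forall>J. J \<subseteq> {1..n} \<and> card J = k \<and> P J \<noteq> 0 \<longrightarrow> gale_le {1..k} J)"
    using assms gale_le_initial by auto
next
  fix I assume "I \<subseteq> {1..n} \<and> card I = k \<and> P I \<noteq> 0 \<and>
      (\<forall>J. J \<subseteq> {1..n} \<and> card J = k \<and> P J \<noteq> 0 \<longrightarrow> gale_le I J)"
  then show "I = {1..k}"
    using assms gale_le_initial_imp_eq[of I n k] by auto
qed

lemma Xi_head_tail:
  assumes m: "1 \<le> m" and mp: "m + p < n"
    and nz: "P (head_tail n m p) \<noteq> 0" "P (head_tail n (m - 1) (Suc p)) \<noteq> 0"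
  shows "Xi n P (head_tail n m p) = head_tail n (m - 1) (Suc p)"
proof -
  let ?I = "head_tail n m p"
  define B where "B = {i \<in> ?I. \<exists>j \<in> {1..n} - ?I. i < j \<and> P ((?I - {i}) \<union> {j}) \<noteq> 0}"
  define A where "A = {j \<in> {1..n} - ?I. P ((?I - {m}) \<union> {j}) \<noteq> 0}"
  have swap: "(?I - {m}) \<union> {n - p} = head_tail n (m - 1) (Suc p)"
    unfolding head_tail_def using m mp by auto
  have np: "n - p \<in> {1..n} - ?I" "m < n - p" unfolding head_tail_def using m mp by auto
  have "m \<in> B" unfolding B_def using np swap nz(2) m by (auto simp: head_tail_def)
  moreover have "i \<le> m" if "i \<in> B" for i
    using that unfolding B_def head_tail_def by auto
  moreover have "finite B" unfolding B_def head_tail_def by auto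
  ultimately have max_B: "Max B = m" by (intro Max_eqI) auto
  have "n - p \<in> A" unfolding A_def using np swap nz(2) by auto
  moreover have "j \<le> n - p" if "j \<in> A" for j
    using that unfolding A_def head_tail_def by auto
  moreover have "finite A" unfolding A_def by auto
  ultimately have max_A: "Max A = n - p" by (intro Max_eqI) auto
  have "B \<noteq> {}" using \<open>m \<in> B\<close> by auto
  then show ?thesis
    unfolding Xi_def Let_def B_def[symmetric] using nz(1) max_B max_A swap unfolding A_def by simp
qed

lemma Xi_head_tail_0: "Xi n P (head_tail n 0 p) = head_tail n 0 p"
proof -
  have "{i \<in> head_tail n 0 p. \<exists>j \<in> {1..n} - head_tail n 0 p. i < j \<and> P ((head_tail n 0 p - {i}) \<union> {j}) \<noteq> 0} = {}"
    unfolding head_tail_def by auto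
  then show ?thesis unfolding Xi_def Let_def by simp
qed

lemma Xi_iterate_initial:
  assumes nz: "\<And>m p. m + p \<le> n \<Longrightarrow> P (head_tail n m p) \<noteq> 0" and k: "k < n"
  shows "(Xi n P ^^ t) (head_tail n k 0) = head_tail n (k - min t k) (min t k)"
proof (induction t)
  case (Suc t)
  show ?case
  proof (cases "t < k")
    case True
    then have "(Xi n P ^^ Suc t) (head_tail n k 0) = Xi n P (head_tail n (k - t) t)"
      using Suc by simp
    also have "\<dots> = head_tail n (k - t - 1) (Suc t)"
      using True k by (intro Xi_head_tail nz) auto
    finally show ?thesis using True by (simp add: min_def)
  next
    case False
    then show ?thesis using Suc Xi_head_tail_0 by (simp add: min_def)
  qed
qed simp

lemma extremal_eq_head_tail_sets:
  assumes nz: "\<And>m p. m + p \<le> n \<Longrightarrow> P (head_tail n m p) \<noteq> 0"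
  shows "extremal n P = head_tail_sets n"
proof -
  have Ik: "Ik n P k = head_tail n k 0" if "k \<le> n" for k
    using Ik_eq_initial[OF that] nz[of k 0] that by (simp add: head_tail_0)
  have "(Xi n P ^^ t) (Ik n P k) \<in> head_tail_sets n" if "1 \<le> k" "k \<le> n - 1" for t k
    using that Ik Xi_iterate_initial[where P = P, OF nz, of k t] unfolding head_tail_sets_def
    by (intro CollectI exI[of _ "k - min t k"] exI[of _ "min t k"]) auto
  moreover have "head_tail n m p = (Xi n P ^^ p) (Ik n P (m + p))" if "m + p < n" for m p
    using that Ik Xi_iterate_initial[where P = P, OF nz, of "m + p" p] by simp
  ultimately show ?thesis
    unfolding extremal_def head_tail_sets_def by fastforce
qed

theorem mainTheorem9:
  fixes n :: nat
  defines "Pos \<equiv> {as :: real list. length as = Nn n \<and> (\<forall>x \<in> set as. x > 0)}"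
  shows "inj_on (\<lambda>as. \<lambda>I \<in> {I. I \<noteq> {} \<and> I \<subset> {1..n}}. plucker (Mflag n as) I) Pos
    \<and> (\<forall>j < Nn n. \<exists>e :: nat set \<Rightarrow> int. \<forall>as \<in> Pos.
         as ! j = (\<Prod>I \<in> extremal n (plucker (Mflag n as)).
                      plucker (Mflag n as) I powi e I))"
proof -
  have Pos: "Pos = pos_params n" unfolding Pos_def pos_params_def ..
  have extremal: "extremal n (plucker (Mflag n as)) = head_tail_sets n" if "as \<in> Pos" for as
    using that plucker_Mflag_head_tail_pos unfolding Pos
    by (intro extremal_eq_head_tail_sets) (metis less_irrefl)
  show ?thesis
    using inj_on_pluckers_Mflag laurent_params extremal
    unfolding Pos laurent_monomial_on_def by simp
qed

end
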